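(* Let $G$ be a connected graph and let $e_i$ be an edge of $G$ with end points $p_i,q_i$. For any $s,t\in V(G)$, $$t(G)\,t(\overline{G}_{i,st})=t(G_{st})\,t(\overline{G}_i)-\frac14\big[t(G_{p_is})-t(G_{q_is})-t(G_{p_it})+t(G_{q_it})\big]^2.$$
   Context: Graphs are finite and may have multiple edges and loops; $t(H)$ is the number of spanning trees of $H$; a one-vertex graph has $t=1$. For vertices $x,y$ of $H$, $H_{xy}$ is obtained by identifying $x$ and $y$, with the convention $t(H_{xx}):=0$. $\overline{G}_i$ is the graph obtained by contracting $e_i$, which for counting spanning trees is $G_{p_iq_i}$, and $\overline{G}_{i,st}$ is obtained from $\overline{G}_i$ by identifying $s$ and $t$ (i.e. $G_{p_iq_i,st}$). *)

theory Defs
  imports Complex_Main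
begin

text \<open>A finite multigraph (multiple edges and loops allowed) is given by a vertex set V,
an edge set E (edge identifiers) and an endpoint map ends :: 'e => 'v * 'v.\<close>

definition mgraph :: "'v set \<Rightarrow> 'e set \<Rightarrow> ('e \<Rightarrow> 'v \<times> 'v) \<Rightarrow> bool" where
  "mgraph V E ends \<longleftrightarrow> finite V \<and> finite E \<and>
     (\<forall>e\<in>E. fst (ends e) \<in> V \<and> snd (ends e) \<in> V)"

definition adj_rel :: "'e set \<Rightarrow> ('e \<Rightarrow> 'v \<times> 'v) \<Rightarrow> ('v \<times> 'v) set" where
  "adj_rel F ends = {(u, v). \<exists>e\<in>F. ends e = (u, v) \<or> ends e = (v, u)}"

definition connected_by :: "'v set \<Rightarrow> 'e set \<Rightarrow> ('e \<Rightarrow> 'v \<times> 'v) \<Rightarrow> bool" where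
  "connected_by V F ends \<longleftrightarrow> (\<forall>u\<in>V. \<forall>v\<in>V. (u, v) \<in> (adj_rel F ends)\<^sup>*)"

definition mconnected :: "'v set \<Rightarrow> 'e set \<Rightarrow> ('e \<Rightarrow> 'v \<times> 'v) \<Rightarrow> bool" where
  "mconnected V E ends \<longleftrightarrow> V \<noteq> {} \<and> connected_by V E ends"

text \<open>Spanning trees: edge subsets with |V|-1 edges connecting all vertices
(equivalently, acyclic and connected). A one-vertex graph has exactly one (empty) spanning tree.\<close>

definition spanning_trees :: "'v set \<Rightarrow> 'e set \<Rightarrow> ('e \<Rightarrow> 'v \<times> 'v) \<Rightarrow> 'e set set" where
  "spanning_trees V E ends = {T. T \<subseteq> E \<and> card T = card V - 1 \<and> connected_by V T ends}"

definition ntrees :: "'v set \<Rightarrow> 'e set \<Rightarrow> ('e \<Rightarrow> 'v \<times> 'v) \<Rightarrow> nat" where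
  "ntrees V E ends = card (spanning_trees V E ends)"

definition ren :: "'v \<Rightarrow> 'v \<Rightarrow> 'v \<Rightarrow> 'v" where
  "ren x y v = (if v = y then x else v)"

definition ident_ends :: "('e \<Rightarrow> 'v \<times> 'v) \<Rightarrow> 'v \<Rightarrow> 'v \<Rightarrow> 'e \<Rightarrow> 'v \<times> 'v" where
  "ident_ends ends x y e = (ren x y (fst (ends e)), ren x y (snd (ends e)))"

text \<open>t(H_xy), with the convention t(H_xx) = 0.\<close>

definition ntrees_id :: "'v set \<Rightarrow> 'e set \<Rightarrow> ('e \<Rightarrow> 'v \<times> 'v) \<Rightarrow> 'v \<Rightarrow> 'v \<Rightarrow> nat" where
  "ntrees_id V E ends x y =
     (if x = y then 0 else ntrees (V - {y}) E (ident_ends ends x y))"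

text \<open>t(H_{pq,st}): identify p and q, then the images of s and t; the convention
t(H_xx)=0 applies at each identification step.\<close>

definition ntrees_id2 :: "'v set \<Rightarrow> 'e set \<Rightarrow> ('e \<Rightarrow> 'v \<times> 'v) \<Rightarrow> 'v \<Rightarrow> 'v \<Rightarrow> 'v \<Rightarrow> 'v \<Rightarrow> nat" where
  "ntrees_id2 V E ends p q s t =
     (if p = q then 0
      else ntrees_id (V - {q}) E (ident_ends ends p q) (ren p q s) (ren p q t))"

end

theory Submission
  imports Defs "Jordan_Normal_Form.Determinant"
begin

text \<open>Let L be the reduced Laplacian of G (row and column of a root vertex deleted), so that
t(G) = det L by the matrix-tree theorem, proved here by deletion-contraction. Adding an edge xy
adds the rank-one matrix w w^T with w = e_x - e_y, while deletion-contraction of the new edge gives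
t(G + xy) = t(G) + t(G_xy); so the matrix determinant lemma yields t(G_xy) = t(G) R(x,y), where
R(x,y) = w^T L^-1 w is the effective resistance. Adding both st and pq, deletion-contraction
gives t(G) + t(G_st) + t(G_pq) + t(G_pq,st), and the rank-two determinant lemma gives
t(G) ((1 + R(s,t)) (1 + R(p,q)) - B^2) with B = w_st^T L^-1 w_pq; hence
t(G_pq,st) = t(G) (R(s,t) R(p,q) - B^2). Polarization finally expresses B through resistances:
2 B = R(p,t) + R(q,s) - R(p,s) - R(q,t).\<close>

section \<open>Connectivity under contraction of an edge\<close>

lemma adj_rel_mono: "F \<subseteq> G \<Longrightarrow> adj_rel F ends \<subseteq> adj_rel G ends"
  unfolding adj_rel_def by auto

lemma rtrancl_adj_rel_remove_loop:
  assumes "f \<in> T" "ends f = (c, c)"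
  shows "(adj_rel (T - {f}) ends)\<^sup>* = (adj_rel T ends)\<^sup>*"
proof -
  have "(adj_rel (T - {f}) ends)\<^sup>* = (adj_rel (T - {f}) ends \<union> {(c, c)})\<^sup>*"
    by (rule rtrancl_subset[symmetric]) auto
  also have "adj_rel (T - {f}) ends \<union> {(c, c)} = adj_rel T ends"
    using assms unfolding adj_rel_def by auto
  finally show ?thesis .
qed

lemma ident_ends_loop: "ends e = (a, b) \<or> ends e = (b, a) \<Longrightarrow> ident_ends ends a b e = (a, a)"
  by (cases "ends e") (auto simp: ident_ends_def ren_def)

lemma rtrancl_adj_rel_ident_ends:
  assumes "(u, v) \<in> (adj_rel T ends)\<^sup>*"
  shows "(ren a b u, ren a b v) \<in> (adj_rel T (ident_ends ends a b))\<^sup>*"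
  using assms
proof (induction rule: rtrancl_induct)
  case (step y z)
  then have "(ren a b y, ren a b z) \<in> adj_rel T (ident_ends ends a b)"
    unfolding adj_rel_def ident_ends_def by force
  with step.IH show ?case by (rule rtrancl_into_rtrancl)
qed simp

lemma rtrancl_adj_rel_ren:
  assumes "e \<in> T" "ends e = (a, b) \<or> ends e = (b, a)"
  shows "(z, ren a b z) \<in> (adj_rel T ends)\<^sup>*" "(ren a b z, z) \<in> (adj_rel T ends)\<^sup>*"
proof -
  have "(a, b) \<in> adj_rel T ends" "(b, a) \<in> adj_rel T ends"
    using assms unfolding adj_rel_def by auto
  then show "(z, ren a b z) \<in> (adj_rel T ends)\<^sup>*" "(ren a b z, z) \<in> (adj_rel T ends)\<^sup>*"
    unfolding ren_def by auto
qed

lemma rtrancl_adj_rel_unident_ends: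
  assumes e: "e \<in> T" "ends e = (a, b) \<or> ends e = (b, a)"
    and "(x, y) \<in> (adj_rel T (ident_ends ends a b))\<^sup>*"
  shows "(x, y) \<in> (adj_rel T ends)\<^sup>*"
  using assms(3)
proof (induction rule: rtrancl_induct)
  case (step y z)
  note ren = rtrancl_adj_rel_ren[of e T ends a b, OF e]
  have lift: "(ren a b u, ren a b v) \<in> (adj_rel T ends)\<^sup>*" if "(u, v) \<in> adj_rel T ends" for u v
    using ren(2)[of u] r_into_rtrancl[OF that] ren(1)[of v] by (rule rtrancl_trans[OF rtrancl_trans])
  obtain f where f: "f \<in> T" "ident_ends ends a b f = (y, z) \<or> ident_ends ends a b f = (z, y)"
    using step.hyps(2) unfolding adj_rel_def by auto
  obtain c d where cd: "ends f = (c, d)" by fastforce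
  have "(c, d) \<in> adj_rel T ends" "(d, c) \<in> adj_rel T ends"
    using f(1) cd unfolding adj_rel_def by auto
  then have "(ren a b c, ren a b d) \<in> (adj_rel T ends)\<^sup>*" "(ren a b d, ren a b c) \<in> (adj_rel T ends)\<^sup>*"
    by (auto intro: lift)
  moreover have "(y, z) = (ren a b c, ren a b d) \<or> (y, z) = (ren a b d, ren a b c)"
    using f(2) cd unfolding ident_ends_def by auto
  ultimately have "(y, z) \<in> (adj_rel T ends)\<^sup>*" by auto
  with step.IH show ?case by (rule rtrancl_trans)
qed simp

lemma connected_by_contract:
  assumes "connected_by V T ends" "e \<in> T" "ends e = (a, b) \<or> ends e = (b, a)"
  shows "connected_by (V - {b}) (T - {e}) (ident_ends ends a b)"
proof -
  have "(u, v) \<in> (adj_rel T (ident_ends ends a b))\<^sup>*" if "u \<in> V - {b}" "v \<in> V - {b}" for u v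
  proof -
    have "(u, v) \<in> (adj_rel T ends)\<^sup>*"
      using assms(1) that unfolding connected_by_def by blast
    from rtrancl_adj_rel_ident_ends[OF this, of a b] that show ?thesis
      by (simp add: ren_def)
  qed
  then show ?thesis
    unfolding connected_by_def rtrancl_adj_rel_remove_loop[of e T "ident_ends ends a b" a,
        OF assms(2) ident_ends_loop[of ends e a b, OF assms(3)]]
    by blast
qed

lemma connected_by_uncontract:
  assumes "connected_by (V - {b}) (T - {e}) (ident_ends ends a b)"
    and e: "e \<in> T" "ends e = (a, b) \<or> ends e = (b, a)" and "a \<in> V" "a \<noteq> b"
  shows "connected_by V T ends"
  unfolding connected_by_def
proof (intro ballI)
  fix u v assume "u \<in> V" "v \<in> V"
  then have "ren a b u \<in> V - {b}" "ren a b v \<in> V - {b}"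
    using assms(4,5) unfolding ren_def by auto
  then have "(ren a b u, ren a b v) \<in> (adj_rel (T - {e}) (ident_ends ends a b))\<^sup>*"
    using assms(1) unfolding connected_by_def by blast
  also have "\<dots> \<subseteq> (adj_rel T (ident_ends ends a b))\<^sup>*"
    by (intro rtrancl_mono adj_rel_mono) auto
  finally have "(ren a b u, ren a b v) \<in> (adj_rel T ends)\<^sup>*"
    by (rule rtrancl_adj_rel_unident_ends[of e T ends a b, OF e])
  with rtrancl_adj_rel_ren[of e T ends a b, OF e] show "(u, v) \<in> (adj_rel T ends)\<^sup>*"
    by (blast intro: rtrancl_trans[OF rtrancl_trans])
qed

lemma card_le_Suc_card_if_connected_by:
  assumes "finite F" "finite V" "connected_by V F ends"
  shows "card V \<le> card F + 1"
  using assms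
proof (induction F arbitrary: V ends rule: finite_induct)
  case empty
  then have "\<forall>u\<in>V. \<forall>v\<in>V. u = v"
    unfolding connected_by_def adj_rel_def by auto
  then show ?case using empty.prems(1) by (simp add: card_le_Suc0_iff_eq)
next
  case (insert e F)
  obtain a b where ab: "ends e = (a, b)" by fastforce
  have "insert e F - {e} = F" using insert.hyps(2) by blast
  then have "connected_by (V - {b}) F (ident_ends ends a b)"
    using connected_by_contract[OF insert.prems(2), of e a b] ab by simp
  then have "card (V - {b}) \<le> card F + 1"
    by (rule insert.IH[rotated]) (use insert.prems(1) in simp)
  moreover have "card V \<le> card (V - {b}) + 1"
    using card_Suc_Diff1[OF insert.prems(1), of b] by (cases "b \<in> V") auto
  ultimately show ?case
    using insert.hyps by simp
qed

section \<open>Deletion and contraction of spanning trees\<close>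

lemma finite_spanning_trees: "finite E \<Longrightarrow> finite (spanning_trees V E ends)"
  unfolding spanning_trees_def by (rule finite_subset[of _ "Pow E"]) auto

lemma spanning_tree_no_loop:
  assumes "finite V" "finite E" "T \<in> spanning_trees V E ends" "f \<in> T"
  shows "ends f \<noteq> (c, c)"
proof
  assume loop: "ends f = (c, c)"
  have T: "T \<subseteq> E" "card T = card V - 1" "connected_by V T ends"
    using assms(3) unfolding spanning_trees_def by auto
  have "finite T" by (rule finite_subset[OF T(1) assms(2)])
  have "connected_by V (T - {f}) ends"
    using T(3) unfolding connected_by_def rtrancl_adj_rel_remove_loop[of f T ends c, OF assms(4) loop] .
  then have "card V \<le> card (T - {f}) + 1"
    using \<open>finite T\<close> assms(1) by (intro card_le_Suc_card_if_connected_by) auto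
  moreover have "card (T - {f}) < card T"
    by (rule card_Diff1_less[OF \<open>finite T\<close> assms(4)])
  ultimately show False using T(2) by linarith
qed

lemma ntrees_remove_loop:
  assumes "finite V" "finite E" "ends f = (c, c)"
  shows "ntrees V (E - {f}) ends = ntrees V E ends"
proof -
  have "f \<notin> T" if "T \<in> spanning_trees V E ends" for T
    using spanning_tree_no_loop[OF assms(1,2) that, of f c] assms(3) by blast
  then have "spanning_trees V (E - {f}) ends = spanning_trees V E ends"
    unfolding spanning_trees_def by blast
  then show ?thesis unfolding ntrees_def by simp
qed

lemma contracted_edge_notin_spanning_tree:
  assumes "finite V" "finite E" "ends e = (a, b) \<or> ends e = (b, a)"
    and "T \<in> spanning_trees (V - {b}) E (ident_ends ends a b)"
  shows "e \<notin> T"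
  using spanning_tree_no_loop[of "V - {b}" E T "ident_ends ends a b" e a]
    ident_ends_loop[of ends e a b, OF assms(3)] assms
  by auto

lemma spanning_trees_containing_edge:
  assumes "finite V" "finite E" and e: "e \<in> E" "ends e = (a, b) \<or> ends e = (b, a)"
    and ab: "a \<in> V" "b \<in> V" "a \<noteq> b"
  shows "{T \<in> spanning_trees V E ends. e \<in> T}
       = insert e ` spanning_trees (V - {b}) E (ident_ends ends a b)"
proof -
  have "card {a, b} \<le> card V" using ab assms(1) by (intro card_mono) auto
  then have card_V: "card (V - {b}) = card V - 1" "card V \<ge> 2"
    using ab assms(1) by (auto simp: card_Diff_singleton_if)
  show ?thesis
  proof (intro equalityI subsetI)
    fix T assume "T \<in> {T \<in> spanning_trees V E ends. e \<in> T}"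
    then have T: "T \<subseteq> E" "card T = card V - 1" "connected_by V T ends" "e \<in> T"
      unfolding spanning_trees_def by auto
    have "finite T" by (rule finite_subset[OF T(1) assms(2)])
    have "T - {e} \<in> spanning_trees (V - {b}) E (ident_ends ends a b)"
      unfolding spanning_trees_def
      using T \<open>finite T\<close> card_V connected_by_contract[OF T(3) T(4) e(2)] by auto
    moreover have "T = insert e (T - {e})" using T(4) by auto
    ultimately show "T \<in> insert e ` spanning_trees (V - {b}) E (ident_ends ends a b)" by blast
  next
    fix T assume "T \<in> insert e ` spanning_trees (V - {b}) E (ident_ends ends a b)"
    then obtain T' where T': "T' \<in> spanning_trees (V - {b}) E (ident_ends ends a b)" "T = insert e T'"
      by auto
    have "e \<notin> T'"
      by (rule contracted_edge_notin_spanning_tree[of V E ends e a b, OF assms(1,2) e(2) T'(1)])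
    have T'_props: "T' \<subseteq> E" "card T' = card (V - {b}) - 1"
      "connected_by (V - {b}) T' (ident_ends ends a b)"
      using T'(1) unfolding spanning_trees_def by auto
    have "finite T'" by (rule finite_subset[OF T'_props(1) assms(2)])
    have "connected_by V T ends"
      by (rule connected_by_uncontract[of V b T e ends a])
        (use T' \<open>e \<notin> T'\<close> T'_props(3) e ab in auto)
    moreover have "card T = card V - 1"
      using T'(2) \<open>e \<notin> T'\<close> \<open>finite T'\<close> T'_props(2) card_V by auto
    ultimately show "T \<in> {T \<in> spanning_trees V E ends. e \<in> T}"
      using T' T'_props(1) e(1) unfolding spanning_trees_def by auto
  qed
qed

lemma ntrees_delete_contract:
  assumes "finite V" "finite E" and e: "e \<in> E" "ends e = (a, b) \<or> ends e = (b, a)"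
    and ab: "a \<in> V" "b \<in> V" "a \<noteq> b"
  shows "ntrees V E ends = ntrees V (E - {e}) ends + ntrees (V - {b}) E (ident_ends ends a b)"
proof -
  let ?S = "spanning_trees V E ends"
  let ?S_del = "spanning_trees V (E - {e}) ends"
  let ?S_con = "spanning_trees (V - {b}) E (ident_ends ends a b)"
  have "?S = ?S_del \<union> {T \<in> ?S. e \<in> T}" "?S_del \<inter> {T \<in> ?S. e \<in> T} = {}"
    unfolding spanning_trees_def by auto
  moreover have "finite ?S_del" "finite ?S"
    using assms(2) by (auto intro: finite_spanning_trees)
  ultimately have "card ?S = card ?S_del + card {T \<in> ?S. e \<in> T}"
    by (metis (no_types, lifting) card_Un_disjoint finite_Un)
  also have "card {T \<in> ?S. e \<in> T} = card (insert e ` ?S_con)"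
    unfolding spanning_trees_containing_edge[of V E e ends a b, OF assms] ..
  also have "\<dots> = card ?S_con"
  proof (rule card_image)
    show "inj_on (insert e) ?S_con"
      using contracted_edge_notin_spanning_tree[of V E ends e a b, OF assms(1,2) e(2)]
      unfolding inj_on_def by (metis insert_ident)
  qed
  finally show ?thesis unfolding ntrees_def .
qed

lemma ntrees_image_inj:
  assumes "inj h"
  shows "ntrees V (h ` E) ends = ntrees V E (ends \<circ> h)"
proof -
  have adj: "adj_rel (h ` T) ends = adj_rel T (ends \<circ> h)" for T
    unfolding adj_rel_def by auto
  have card_h: "card (h ` T) = card T" for T
    using assms by (simp add: card_image inj_on_subset)
  have "spanning_trees V (h ` E) ends = image h ` spanning_trees V E (ends \<circ> h)"
  proof (intro equalityI subsetI)
    fix T' assume T': "T' \<in> spanning_trees V (h ` E) ends"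
    define T where "T = h -` T' \<inter> E"
    have T'_eq: "T' = h ` T" using T' unfolding T_def spanning_trees_def by auto
    have "T \<subseteq> E" unfolding T_def by (rule Int_lower2)
    then have "T \<in> spanning_trees V E (ends \<circ> h)"
      using T' unfolding T'_eq spanning_trees_def connected_by_def by (simp add: adj card_h)
    then show "T' \<in> image h ` spanning_trees V E (ends \<circ> h)" using T'_eq by blast
  qed (auto simp: spanning_trees_def connected_by_def adj card_h)
  moreover have "inj_on (image h) X" for X
    using assms by (simp add: inj_on_def inj_image_eq_iff)
  ultimately show ?thesis unfolding ntrees_def by (simp add: card_image)
qed

lemma mgraph_ident_ends:
  assumes "mgraph V E ends" "a \<in> V" "a \<noteq> b"
  shows "mgraph (V - {b}) E (ident_ends ends a b)"
  using assms unfolding mgraph_def ident_ends_def ren_def by auto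

lemma ntrees_pos:
  assumes "mgraph V E ends" "mconnected V E ends"
  shows "ntrees V E ends > 0"
  using assms
proof (induction "card V" arbitrary: V ends rule: less_induct)
  case less
  have V: "finite V" "V \<noteq> {}" and E: "finite E" and conn: "connected_by V E ends"
    using less.prems unfolding mgraph_def mconnected_def by auto
  show ?case
  proof (cases "\<exists>e\<in>E. fst (ends e) \<noteq> snd (ends e)")
    case True
    then obtain e a b where e: "e \<in> E" "ends e = (a, b)" "a \<noteq> b"
      by (metis prod.collapse)
    then have ab: "a \<in> V" "b \<in> V"
      using less.prems(1) unfolding mgraph_def by (metis fst_conv snd_conv)+
    have "connected_by (V - {b}) (E - {e}) (ident_ends ends a b)"
      using connected_by_contract[OF conn e(1)] e(2) by simp
    moreover have "(adj_rel (E - {e}) (ident_ends ends a b))\<^sup>* \<subseteq> (adj_rel E (ident_ends ends a b))\<^sup>*"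
      by (intro rtrancl_mono adj_rel_mono) auto
    ultimately have "mconnected (V - {b}) E (ident_ends ends a b)"
      unfolding mconnected_def connected_by_def using ab e(3) by blast
    moreover have "mgraph (V - {b}) E (ident_ends ends a b)"
      by (rule mgraph_ident_ends[OF less.prems(1) ab(1) e(3)])
    moreover have "card (V - {b}) < card V" using V(1) ab(2) by (rule card_Diff1_less)
    ultimately have "ntrees (V - {b}) E (ident_ends ends a b) > 0"
      using less.hyps by blast
    then show ?thesis
      using ntrees_delete_contract[of V E e ends a b] V(1) E e ab by simp
  next
    case False
    then have "adj_rel E ends \<subseteq> Id" unfolding adj_rel_def by force
    then have "(adj_rel E ends)\<^sup>* \<subseteq> Id" using rtrancl_mono[of "adj_rel E ends" Id] by simp
    then obtain r where "V = {r}"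
      using conn V(2) unfolding connected_by_def by blast
    then have "{} \<in> spanning_trees V E ends"
      unfolding spanning_trees_def connected_by_def by auto
    then show ?thesis
      unfolding ntrees_def using finite_spanning_trees[OF E] by (metis card_gt_0_iff empty_iff)
  qed
qed

section \<open>Adding an edge\<close>

text \<open>The graph G + xy: the new edge is \<^term>\<open>None\<close>, the old edges are tagged with \<^term>\<open>Some\<close>.\<close>

definition add_edge :: "'e set \<Rightarrow> 'e option set" where
  "add_edge E = insert None (Some ` E)"

definition add_edge_ends :: "('e \<Rightarrow> 'v \<times> 'v) \<Rightarrow> 'v \<Rightarrow> 'v \<Rightarrow> 'e option \<Rightarrow> 'v \<times> 'v" where
  "add_edge_ends ends x y = case_option (x, y) ends"

lemma add_edge_ends_Some: "add_edge_ends ends x y \<circ> Some = ends"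
  unfolding add_edge_ends_def by auto

lemma add_edge_minus_None: "add_edge E - {None} = Some ` E"
  unfolding add_edge_def by auto

lemma finite_add_edge: "finite E \<Longrightarrow> finite (add_edge E)"
  unfolding add_edge_def by simp

lemma ident_ends_add_edge_ends:
  "ident_ends (add_edge_ends ends x y) a b = add_edge_ends (ident_ends ends a b) (ren a b x) (ren a b y)"
  unfolding add_edge_ends_def ident_ends_def by (auto split: option.splits)

lemma mgraph_add_edge:
  "mgraph V E ends \<Longrightarrow> x \<in> V \<Longrightarrow> y \<in> V \<Longrightarrow> mgraph V (add_edge E) (add_edge_ends ends x y)"
  unfolding mgraph_def add_edge_def add_edge_ends_def by auto

lemma ntrees_add_edge_remove_new:
  "ntrees V (add_edge E - {None}) (add_edge_ends ends x y) = ntrees V E ends"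
  unfolding add_edge_minus_None ntrees_image_inj[OF inj_Some] add_edge_ends_Some ..

lemma ntrees_add_edge:
  assumes G: "mgraph V E ends" and "x \<in> V" "y \<in> V"
  shows "ntrees V (add_edge E) (add_edge_ends ends x y) = ntrees V E ends + ntrees_id V E ends x y"
proof -
  have V: "finite V" and E: "finite (add_edge E)"
    using G unfolding mgraph_def by (auto intro: finite_add_edge)
  have new_edge: "None \<in> add_edge E" "add_edge_ends ends x y None = (x, y)"
    unfolding add_edge_def add_edge_ends_def by auto
  show ?thesis
  proof (cases "x = y")
    case True
    then show ?thesis
      using ntrees_remove_loop[OF V E, of "add_edge_ends ends x y" None x] new_edge
      by (simp add: ntrees_add_edge_remove_new ntrees_id_def)
  next
    case False
    have "ntrees (V - {y}) (add_edge E) (ident_ends (add_edge_ends ends x y) x y)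
        = ntrees (V - {y}) (add_edge E - {None}) (ident_ends (add_edge_ends ends x y) x y)"
      using ntrees_remove_loop[of "V - {y}" "add_edge E" "ident_ends (add_edge_ends ends x y) x y"
          None x] V E ident_ends_loop[of "add_edge_ends ends x y" None x y] new_edge by simp
    also have "\<dots> = ntrees_id V E ends x y"
      unfolding ident_ends_add_edge_ends ntrees_add_edge_remove_new ntrees_id_def using False by simp
    finally show ?thesis
      using ntrees_delete_contract[of V "add_edge E" None "add_edge_ends ends x y" x y]
        V E new_edge assms(2,3) False by (simp add: ntrees_add_edge_remove_new)
  qed
qed

lemma ntrees_id_add_edge:
  assumes G: "mgraph V E ends" and "p \<in> V" "s \<in> V" "t \<in> V"
  shows "ntrees_id V (add_edge E) (add_edge_ends ends s t) p q
       = ntrees_id V E ends p q + ntrees_id2 V E ends p q s t"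
proof (cases "p = q")
  case False
  have "ntrees_id V (add_edge E) (add_edge_ends ends s t) p q
      = ntrees (V - {q}) (add_edge E) (add_edge_ends (ident_ends ends p q) (ren p q s) (ren p q t))"
    unfolding ntrees_id_def ident_ends_add_edge_ends using False by simp
  also have "\<dots> = ntrees (V - {q}) E (ident_ends ends p q)
      + ntrees_id (V - {q}) E (ident_ends ends p q) (ren p q s) (ren p q t)"
    by (rule ntrees_add_edge[OF mgraph_ident_ends[OF G assms(2) False]])
      (use assms False in \<open>auto simp: ren_def\<close>)
  finally show ?thesis
    unfolding ntrees_id_def ntrees_id2_def using False by simp
qed (simp add: ntrees_id_def ntrees_id2_def)

lemma ntrees_add_two_edges:
  assumes G: "mgraph V E ends" and V: "p \<in> V" "q \<in> V" "s \<in> V" "t \<in> V"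
  shows "ntrees V (add_edge (add_edge E)) (add_edge_ends (add_edge_ends ends s t) p q)
       = ntrees V E ends + ntrees_id V E ends s t + ntrees_id V E ends p q + ntrees_id2 V E ends p q s t"
  using ntrees_add_edge[OF mgraph_add_edge[OF G V(3,4)] V(1,2)] ntrees_add_edge[OF G V(3,4)]
    ntrees_id_add_edge[OF G V(1,3,4), of q]
  by simp

section \<open>The matrix-tree theorem\<close>

lemma det_add_unit_diag:
  fixes A :: "'a :: comm_ring_1 mat"
  assumes A: "A \<in> carrier_mat n n" and k: "k < n"
  shows "det (A + mat n n (\<lambda>(i, j). if i = k \<and> j = k then 1 else 0)) = det A + det (mat_delete A k k)"
proof -
  let ?B = "A + mat n n (\<lambda>(i, j). if i = k \<and> j = k then 1 else 0)"
  have B: "?B \<in> carrier_mat n n" using A by auto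
  have "mat_delete ?B k j = mat_delete A k j" if "j < n" for j
    using A that unfolding mat_delete_def by (intro eq_matI) auto
  then have "det ?B = (\<Sum>j<n. (A $$ (k, j) + (if j = k then 1 else 0)) * cofactor A k j)"
    unfolding laplace_expansion_row[OF B k] using A k by (intro sum.cong refl) (auto simp: cofactor_def)
  also have "\<dots> = (\<Sum>j<n. A $$ (k, j) * cofactor A k j) + (\<Sum>j<n. if j = k then cofactor A k j else 0)"
    unfolding sum.distrib[symmetric] by (intro sum.cong) (auto simp: distrib_right)
  also have "(\<Sum>j<n. if j = k then cofactor A k j else 0) = cofactor A k k"
    using k by simp
  finally show ?thesis
    unfolding laplace_expansion_row[OF A k, symmetric] by (simp add: cofactor_def)
qed

lemma det_eq_0_if_row_sums_eq_0:
  fixes A :: "'a :: idom mat"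
  assumes A: "A \<in> carrier_mat n n" and "n > 0" and rows: "\<And>i. i < n \<Longrightarrow> (\<Sum>j<n. A $$ (i, j)) = 0"
  shows "det A = 0"
proof -
  let ?v = "vec n (\<lambda>_. 1 :: 'a)"
  have "?v \<in> carrier_vec n" "?v \<noteq> 0\<^sub>v n"
    using \<open>n > 0\<close> by (auto simp: vec_eq_iff)
  moreover have "A *\<^sub>v ?v = 0\<^sub>v n"
    using A rows by (intro eq_vecI) (auto simp: scalar_prod_def atLeast0LessThan)
  ultimately show ?thesis
    using det_0_iff_vec_prod_zero[OF A] by blast
qed

lemma nth_remove1:
  assumes "distinct xs" "k < length xs" "xs ! k = b" "i < length xs - 1"
  shows "remove1 b xs ! i = xs ! (if i < k then i else Suc i)"
proof -
  have xs: "xs = take k xs @ b # drop (Suc k) xs"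
    using assms(2,3) by (metis id_take_nth_drop)
  from assms(1) have "distinct (take k xs @ b # drop (Suc k) xs)"
    by (subst (asm) xs)
  then have "b \<notin> set (take k xs)" by simp
  with xs have "remove1 b xs = take k xs @ drop (Suc k) xs"
    by (metis remove1.simps(2) remove1_append)
  then show ?thesis using assms by (auto simp: nth_append min_def)
qed

definition incident_edges :: "'e set \<Rightarrow> ('e \<Rightarrow> 'v \<times> 'v) \<Rightarrow> 'v \<Rightarrow> 'e set" where
  "incident_edges E ends x =
     {f \<in> E. fst (ends f) \<noteq> snd (ends f) \<and> (fst (ends f) = x \<or> snd (ends f) = x)}"

definition edges_between :: "'e set \<Rightarrow> ('e \<Rightarrow> 'v \<times> 'v) \<Rightarrow> 'v \<Rightarrow> 'v \<Rightarrow> 'e set" where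
  "edges_between E ends x y = {f \<in> E. ends f = (x, y) \<or> ends f = (y, x)}"

definition laplacian :: "'e set \<Rightarrow> ('e \<Rightarrow> 'v \<times> 'v) \<Rightarrow> 'v \<Rightarrow> 'v \<Rightarrow> real" where
  "laplacian E ends x y =
     (if x = y then real (card (incident_edges E ends x)) else - real (card (edges_between E ends x y)))"

text \<open>When \<open>vs\<close> lists the vertices other than a root, this is the reduced Laplacian.\<close>

definition laplacian_mat :: "'e set \<Rightarrow> ('e \<Rightarrow> 'v \<times> 'v) \<Rightarrow> 'v list \<Rightarrow> real mat" where
  "laplacian_mat E ends vs = mat (length vs) (length vs) (\<lambda>(i, j). laplacian E ends (vs ! i) (vs ! j))"

lemma laplacian_mat_carrier: "laplacian_mat E ends vs \<in> carrier_mat (length vs) (length vs)"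
  unfolding laplacian_mat_def by simp

lemma laplacian_sym: "laplacian E ends x y = laplacian E ends y x"
  unfolding laplacian_def edges_between_def by (auto intro!: arg_cong[where f = card])

lemma laplacian_delete_edge:
  assumes "finite E" "e \<in> E" "ends e = (r, b) \<or> ends e = (b, r)" "r \<noteq> b" "x \<noteq> r" "y \<noteq> r"
  shows "laplacian E ends x y = laplacian (E - {e}) ends x y + (if x = b \<and> y = b then 1 else 0)"
proof (cases "x = b \<and> y = b")
  case True
  have "incident_edges E ends b = insert e (incident_edges (E - {e}) ends b)"
    "e \<notin> incident_edges (E - {e}) ends b" "finite (incident_edges (E - {e}) ends b)"
    using assms unfolding incident_edges_def by auto
  with True show ?thesis unfolding laplacian_def by simp
next
  case False
  have "incident_edges E ends x = incident_edges (E - {e}) ends x" if "x = y"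
    using assms False that unfolding incident_edges_def by auto
  moreover have "edges_between E ends x y = edges_between (E - {e}) ends x y" if "x \<noteq> y"
    using assms that unfolding edges_between_def by auto
  ultimately show ?thesis using False unfolding laplacian_def by auto
qed

lemma laplacian_contract:
  assumes "ends e = (r, b) \<or> ends e = (b, r)" "r \<noteq> b" "x \<notin> {r, b}" "y \<notin> {r, b}"
  shows "laplacian E (ident_ends ends r b) x y = laplacian (E - {e}) ends x y"
proof -
  have e: "ident_ends ends r b e = (r, r)" by (rule ident_ends_loop[of ends e r b, OF assms(1)])
  have "incident_edges E (ident_ends ends r b) x = incident_edges (E - {e}) ends x"
    using e assms(3) unfolding incident_edges_def
    by (auto simp: ident_ends_def ren_def split: if_splits)
  moreover have "edges_between E (ident_ends ends r b) x y = edges_between (E - {e}) ends x y"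
    using e assms(3,4) unfolding edges_between_def
    by (auto simp: ident_ends_def ren_def split: if_splits)
  ultimately show ?thesis by (simp only: laplacian_def)
qed

lemma laplacian_mat_delete_edge:
  assumes "finite E" "e \<in> E" "ends e = (r, b) \<or> ends e = (b, r)" "r \<noteq> b" "r \<notin> set vs"
    and "distinct vs" "k < length vs" "vs ! k = b"
  shows "laplacian_mat E ends vs = laplacian_mat (E - {e}) ends vs
     + mat (length vs) (length vs) (\<lambda>(i, j). if i = k \<and> j = k then 1 else 0)"
proof (rule eq_matI)
  fix i j assume "i < dim_row (laplacian_mat (E - {e}) ends vs
     + mat (length vs) (length vs) (\<lambda>(i, j). if i = k \<and> j = k then 1 else 0))"
    "j < dim_col (laplacian_mat (E - {e}) ends vs
     + mat (length vs) (length vs) (\<lambda>(i, j). if i = k \<and> j = k then 1 else 0))"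
  then have ij: "i < length vs" "j < length vs" by auto
  then have "vs ! i \<noteq> r" "vs ! j \<noteq> r" using assms(5) nth_mem by force+
  moreover have "(vs ! i = b \<and> vs ! j = b) = (i = k \<and> j = k)"
    using ij assms(6-8) nth_eq_iff_index_eq by metis
  ultimately show "laplacian_mat E ends vs $$ (i, j) = (laplacian_mat (E - {e}) ends vs
     + mat (length vs) (length vs) (\<lambda>(i, j). if i = k \<and> j = k then 1 else 0)) $$ (i, j)"
    using laplacian_delete_edge[of E e ends r b, OF assms(1-4)] ij unfolding laplacian_mat_def by simp
qed (auto simp: laplacian_mat_def)

lemma laplacian_mat_contract:
  assumes "ends e = (r, b) \<or> ends e = (b, r)" "r \<noteq> b" "r \<notin> set vs"
    and "distinct vs" "k < length vs" "vs ! k = b"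
  shows "mat_delete (laplacian_mat (E - {e}) ends vs) k k
       = laplacian_mat E (ident_ends ends r b) (remove1 b vs)"
proof (rule eq_matI)
  have len: "length (remove1 b vs) = length vs - 1"
    using assms(5,6) by (auto simp: length_remove1)
  fix i j assume "i < dim_row (laplacian_mat E (ident_ends ends r b) (remove1 b vs))"
    "j < dim_col (laplacian_mat E (ident_ends ends r b) (remove1 b vs))"
  then have ij: "i < length vs - 1" "j < length vs - 1" using len unfolding laplacian_mat_def by auto
  define i' where "i' = (if i < k then i else Suc i)"
  define j' where "j' = (if j < k then j else Suc j)"
  have i'j': "i' < length vs" "j' < length vs" "i' \<noteq> k" "j' \<noteq> k"
    using ij assms(5) unfolding i'_def j'_def by auto
  have "vs ! i' \<notin> {r, b}" "vs ! j' \<notin> {r, b}"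
    using i'j' assms(3-6) nth_mem nth_eq_iff_index_eq by fastforce+
  then have "laplacian (E - {e}) ends (vs ! i') (vs ! j')
      = laplacian E (ident_ends ends r b) (vs ! i') (vs ! j')"
    using laplacian_contract[of ends e r b, OF assms(1,2)] by simp
  moreover have "remove1 b vs ! i = vs ! i'" "remove1 b vs ! j = vs ! j'"
    using nth_remove1[OF assms(4-6)] ij unfolding i'_def j'_def by auto
  ultimately show "mat_delete (laplacian_mat (E - {e}) ends vs) k k $$ (i, j)
      = laplacian_mat E (ident_ends ends r b) (remove1 b vs) $$ (i, j)"
    using ij assms(5) len unfolding mat_delete_def laplacian_mat_def i'_def j'_def by auto
qed (use assms(5,6) in \<open>auto simp: laplacian_mat_def mat_delete_def length_remove1\<close>)

lemma det_laplacian_mat_delete_contract: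
  assumes "finite E" "e \<in> E" "ends e = (r, b) \<or> ends e = (b, r)" "r \<noteq> b" "r \<notin> set vs"
    and "distinct vs" "b \<in> set vs"
  shows "det (laplacian_mat E ends vs)
       = det (laplacian_mat (E - {e}) ends vs)
         + det (laplacian_mat E (ident_ends ends r b) (remove1 b vs))"
proof -
  obtain k where k: "k < length vs" "vs ! k = b"
    using assms(7) by (metis in_set_conv_nth)
  show ?thesis
    unfolding laplacian_mat_delete_edge[of E e ends r b vs k, OF assms(1-6) k]
      laplacian_mat_contract[of ends e r b vs k, OF assms(3-6) k, symmetric]
    by (rule det_add_unit_diag[OF laplacian_mat_carrier k(1)])
qed

lemma laplacian_row_sum_root_isolated:
  assumes G: "mgraph V E ends" and x: "x \<in> V" "x \<noteq> r"
    and iso: "\<And>e c. e \<in> E \<Longrightarrow> ends e = (r, c) \<or> ends e = (c, r) \<Longrightarrow> c = r"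
  shows "(\<Sum>y\<in>V - {r}. laplacian E ends x y) = 0"
proof -
  have V: "finite V" and E: "finite E" using G unfolding mgraph_def by auto
  have "incident_edges E ends x = (\<Union>y\<in>V - {r} - {x}. edges_between E ends x y)"
  proof (intro equalityI subsetI)
    fix f assume f: "f \<in> incident_edges E ends x"
    obtain c d where cd: "ends f = (c, d)" by fastforce
    have "f \<in> E" "c \<noteq> d" "c = x \<or> d = x" using f cd unfolding incident_edges_def by auto
    moreover have "c \<in> V" "d \<in> V" using G \<open>f \<in> E\<close> cd unfolding mgraph_def by force+
    moreover have "c \<noteq> r"
    proof
      assume "c = r"
      then have "d = r" using cd by (intro iso[OF \<open>f \<in> E\<close>]) simp
      with \<open>c = r\<close> \<open>c \<noteq> d\<close> show False by simp
    qed
    moreover have "d \<noteq> r"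
    proof
      assume "d = r"
      then have "c = r" using cd by (intro iso[OF \<open>f \<in> E\<close>]) simp
      with \<open>d = r\<close> \<open>c \<noteq> d\<close> show False by simp
    qed
    ultimately show "f \<in> (\<Union>y\<in>V - {r} - {x}. edges_between E ends x y)"
      using cd unfolding edges_between_def by auto
  qed (auto simp: incident_edges_def edges_between_def)
  then have "card (incident_edges E ends x) = (\<Sum>y\<in>V - {r} - {x}. card (edges_between E ends x y))"
    by (simp only:) (rule card_UN_disjoint, use V E in \<open>auto simp: edges_between_def\<close>)
  moreover have "(\<Sum>y\<in>V - {r} - {x}. laplacian E ends x y)
      = - (\<Sum>y\<in>V - {r} - {x}. real (card (edges_between E ends x y)))"
    unfolding laplacian_def sum_negf[symmetric] by (rule sum.cong) auto
  ultimately have "laplacian E ends x x = - (\<Sum>y\<in>V - {r} - {x}. laplacian E ends x y)"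
    by (simp add: laplacian_def)
  moreover have "(\<Sum>y\<in>V - {r}. laplacian E ends x y)
      = laplacian E ends x x + (\<Sum>y\<in>V - {r} - {x}. laplacian E ends x y)"
    using x V by (simp add: sum.remove)
  ultimately show ?thesis by simp
qed

lemma det_laplacian_mat_root_isolated:
  assumes G: "mgraph V E ends" and "r \<in> V" "distinct vs" "set vs = V - {r}" "b \<in> V" "b \<noteq> r"
    and iso: "\<And>e c. e \<in> E \<Longrightarrow> ends e = (r, c) \<or> ends e = (c, r) \<Longrightarrow> c = r"
  shows "det (laplacian_mat E ends vs) = 0"
proof (rule det_eq_0_if_row_sums_eq_0[OF laplacian_mat_carrier])
  have "b \<in> set vs" using assms(4-6) by simp
  then show "length vs > 0" by (cases vs) simp_all
  fix i assume "i < length vs"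
  then have "vs ! i \<in> V - {r}" using nth_mem assms(4) by metis
  then have "vs ! i \<in> V" "vs ! i \<noteq> r" by simp_all
  have "(\<Sum>j<length vs. laplacian_mat E ends vs $$ (i, j))
      = (\<Sum>j<length vs. laplacian E ends (vs ! i) (vs ! j))"
    using \<open>i < length vs\<close> unfolding laplacian_mat_def by simp
  also have "\<dots> = (\<Sum>y\<in>V - {r}. laplacian E ends (vs ! i) y)"
    using sum.reindex_bij_betw[OF bij_betw_nth[OF assms(3) refl refl]] assms(4)
    by (simp add: lessThan_atLeast0)
  also have "\<dots> = 0"
    by (rule laplacian_row_sum_root_isolated[OF G \<open>vs ! i \<in> V\<close> \<open>vs ! i \<noteq> r\<close> iso])
  finally show "(\<Sum>j<length vs. laplacian_mat E ends vs $$ (i, j)) = 0" .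
qed

lemma ntrees_singleton: "finite E \<Longrightarrow> ntrees {r} E ends = 1"
proof -
  assume "finite E"
  then have "spanning_trees {r} E ends = {{}}"
    unfolding spanning_trees_def connected_by_def by (auto dest: finite_subset)
  then show ?thesis unfolding ntrees_def by simp
qed

lemma ntrees_root_isolated:
  assumes "r \<in> V" "b \<in> V" "b \<noteq> r"
    and iso: "\<And>e c. e \<in> E \<Longrightarrow> ends e = (r, c) \<or> ends e = (c, r) \<Longrightarrow> c = r"
  shows "ntrees V E ends = 0"
proof -
  have "z = r" if "T \<subseteq> E" "(r, z) \<in> (adj_rel T ends)\<^sup>*" for T z
    using that(2)
  proof (induction rule: rtrancl_induct)
    case (step y z)
    then show ?case using iso that(1) unfolding adj_rel_def by blast
  qed simp
  then have "spanning_trees V E ends = {}"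
    using assms(1-3) unfolding spanning_trees_def connected_by_def by blast
  then show ?thesis unfolding ntrees_def by simp
qed

theorem matrix_tree:
  assumes "mgraph V E ends" "r \<in> V" "distinct vs" "set vs = V - {r}"
  shows "real (ntrees V E ends) = det (laplacian_mat E ends vs)"
  using assms
proof (induction "card V + card E" arbitrary: V E ends vs rule: less_induct)
  case less
  have V: "finite V" and E: "finite E" using less.prems(1) unfolding mgraph_def by auto
  show ?case
  proof (cases "\<exists>e\<in>E. \<exists>b. b \<noteq> r \<and> (ends e = (r, b) \<or> ends e = (b, r))")
    case True
    then obtain e b where e: "e \<in> E" "ends e = (r, b) \<or> ends e = (b, r)" and "r \<noteq> b" by blast
    then have "b \<in> V" using less.prems(1) unfolding mgraph_def by (metis fst_conv snd_conv)
    have "real (ntrees V E ends)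
        = real (ntrees V (E - {e}) ends) + real (ntrees (V - {b}) E (ident_ends ends r b))"
      using ntrees_delete_contract[of V E e ends r b, OF V E e less.prems(2) \<open>b \<in> V\<close> \<open>r \<noteq> b\<close>]
      by simp
    also have "real (ntrees V (E - {e}) ends) = det (laplacian_mat (E - {e}) ends vs)"
      using less.prems card_Diff1_less[OF E e(1)] by (intro less.hyps) (auto simp: mgraph_def)
    also have "real (ntrees (V - {b}) E (ident_ends ends r b))
        = det (laplacian_mat E (ident_ends ends r b) (remove1 b vs))"
    proof (rule less.hyps)
      show "card (V - {b}) + card E < card V + card E"
        using card_Diff1_less[OF V \<open>b \<in> V\<close>] by simp
      show "mgraph (V - {b}) E (ident_ends ends r b)"
        by (rule mgraph_ident_ends[OF less.prems(1,2) \<open>r \<noteq> b\<close>])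
      show "set (remove1 b vs) = V - {b} - {r}"
        using less.prems(3,4) by auto
    qed (use less.prems(2,3) \<open>r \<noteq> b\<close> in simp_all)
    also have "det (laplacian_mat (E - {e}) ends vs) + \<dots> = det (laplacian_mat E ends vs)"
      using det_laplacian_mat_delete_contract[of E e ends r b vs] E e \<open>r \<noteq> b\<close> \<open>b \<in> V\<close>
        less.prems(3,4)
      by simp
    finally show ?thesis .
  next
    case False
    then have iso: "\<And>e c. e \<in> E \<Longrightarrow> ends e = (r, c) \<or> ends e = (c, r) \<Longrightarrow> c = r" by blast
    show ?thesis
    proof (cases "V = {r}")
      case True
      then show ?thesis using less.prems(4) ntrees_singleton[OF E] by (simp add: laplacian_mat_def)
    next
      case False
      then obtain b where "b \<in> V" "b \<noteq> r" using less.prems(2) by blast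
      have "det (laplacian_mat E ends vs) = 0"
        by (rule det_laplacian_mat_root_isolated[OF less.prems \<open>b \<in> V\<close> \<open>b \<noteq> r\<close> iso])
      then show ?thesis using ntrees_root_isolated[OF less.prems(2) \<open>b \<in> V\<close> \<open>b \<noteq> r\<close> iso] by simp
    qed
  qed
qed

section \<open>Low-rank determinant updates\<close>

lemma four_block_mat_lower_upper:
  fixes A :: "'a :: comm_ring_1 mat"
  assumes A: "A \<in> carrier_mat n k" and B: "B \<in> carrier_mat k n"
  shows "four_block_mat (1\<^sub>m n) (0\<^sub>m n k) B (1\<^sub>m k) * four_block_mat (1\<^sub>m n) (- A) (0\<^sub>m k n) (1\<^sub>m k + B * A)
       = four_block_mat (1\<^sub>m n) (- A) B (1\<^sub>m k)"
proof -
  have "B * - A + 1\<^sub>m k * (1\<^sub>m k + B * A) = - (B * A) + (1\<^sub>m k + B * A)"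
    using A B by simp
  also have "\<dots> = 1\<^sub>m k" using A B by (intro eq_matI) auto
  finally have "B * - A + 1\<^sub>m k * (1\<^sub>m k + B * A) = 1\<^sub>m k" .
  then show ?thesis
    using A B by (subst mult_four_block_mat[of _ n n _ k _ k _ _ n _ k]) auto
qed

lemma four_block_mat_upper_lower:
  fixes A :: "'a :: comm_ring_1 mat"
  assumes A: "A \<in> carrier_mat n k" and B: "B \<in> carrier_mat k n"
  shows "four_block_mat (1\<^sub>m n + A * B) (- A) (0\<^sub>m k n) (1\<^sub>m k) * four_block_mat (1\<^sub>m n) (0\<^sub>m n k) B (1\<^sub>m k)
       = four_block_mat (1\<^sub>m n) (- A) B (1\<^sub>m k)"
proof -
  have "(1\<^sub>m n + A * B) * 1\<^sub>m n + - A * B = 1\<^sub>m n + A * B + - (A * B)"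
    using A B by simp
  also have "\<dots> = 1\<^sub>m n" using A B by (intro eq_matI) auto
  finally have "(1\<^sub>m n + A * B) * 1\<^sub>m n + - A * B = 1\<^sub>m n" .
  then show ?thesis
    using A B by (subst mult_four_block_mat[of _ n n _ k _ k _ _ n _ k]) auto
qed

lemma det_one_add_mult_commute:
  fixes A :: "'a :: idom mat"
  assumes A: "A \<in> carrier_mat n k" and B: "B \<in> carrier_mat k n"
  shows "det (1\<^sub>m n + A * B) = det (1\<^sub>m k + B * A)"
proof -
  define L where "L = four_block_mat (1\<^sub>m n) (0\<^sub>m n k) B (1\<^sub>m k)"
  define U1 where "U1 = four_block_mat (1\<^sub>m n) (- A) (0\<^sub>m k n) (1\<^sub>m k + B * A)"
  define U2 where "U2 = four_block_mat (1\<^sub>m n + A * B) (- A) (0\<^sub>m k n) (1\<^sub>m k)"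
  have carrier: "L \<in> carrier_mat (n + k) (n + k)" "U1 \<in> carrier_mat (n + k) (n + k)"
    "U2 \<in> carrier_mat (n + k) (n + k)"
    unfolding L_def U1_def U2_def using A B by auto
  have "det L = 1" unfolding L_def
    by (subst det_four_block_mat_upper_right_zero[of _ n _ k]) (use B in auto)
  moreover have "det U1 = det (1\<^sub>m k + B * A)" unfolding U1_def
    by (subst det_four_block_mat_lower_left_zero[of _ n _ k]) (use A B in auto)
  moreover have "det U2 = det (1\<^sub>m n + A * B)" unfolding U2_def
    by (subst det_four_block_mat_lower_left_zero[of _ n _ k]) (use A B in auto)
  moreover have "L * U1 = U2 * L"
    unfolding L_def U1_def U2_def four_block_mat_lower_upper[OF A B] four_block_mat_upper_lower[OF A B] ..
  ultimately show ?thesis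
    using det_mult[OF carrier(1,2)] det_mult[OF carrier(3,1)] by simp
qed

lemma det_2x2:
  assumes "A \<in> carrier_mat 2 2"
  shows "det A = A $$ (0, 0) * A $$ (1, 1) - A $$ (0, 1) * A $$ (1, 0)"
proof -
  have "det A = (\<Sum>j<2. A $$ (0, j) * cofactor A 0 j)"
    by (rule laplace_expansion_row[OF assms]) simp
  also have "\<dots> = A $$ (0, 0) * cofactor A 0 0 + A $$ (0, 1) * cofactor A 0 1"
    by (simp add: numeral_2_eq_2)
  also have "cofactor A 0 0 = A $$ (1, 1)"
    unfolding cofactor_def using assms
    by (subst det_single[of "mat_delete A 0 0"]) (auto simp: mat_delete_def)
  also have "cofactor A 0 1 = - A $$ (1, 0)"
    unfolding cofactor_def using assms
    by (subst det_single[of "mat_delete A 0 1"]) (auto simp: mat_delete_def)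
  finally show ?thesis by (simp add: algebra_simps)
qed

lemma adj_mat_inverse_symmetric:
  fixes M :: "'a :: field mat"
  assumes M: "M \<in> carrier_mat n n" and "det M \<noteq> 0" and sym: "transpose_mat M = M"
  defines "N \<equiv> (1 / det M) \<cdot>\<^sub>m adj_mat M"
  shows "N \<in> carrier_mat n n" "M * N = 1\<^sub>m n" "transpose_mat N = N"
proof -
  show N: "N \<in> carrier_mat n n" unfolding N_def using adj_mat(1)[OF M] by simp
  have "M * N = (1 / det M) \<cdot>\<^sub>m (M * adj_mat M)" unfolding N_def
    by (rule mult_smult_distrib[OF M adj_mat(1)[OF M]])
  also have "\<dots> = 1\<^sub>m n" using adj_mat(2)[OF M] \<open>det M \<noteq> 0\<close> by (intro eq_matI) auto
  finally show MN: "M * N = 1\<^sub>m n" .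
  have "transpose_mat N * M = 1\<^sub>m n"
    using transpose_mult[OF M N] MN sym by simp
  then show "transpose_mat N = N"
    using N M MN assoc_mult_mat[of "transpose_mat N" n n M n N n]
    by (metis left_mult_one_mat right_mult_one_mat transpose_carrier_mat)
qed

definition bilin_form :: "'a :: comm_ring_1 mat \<Rightarrow> (nat \<Rightarrow> 'a) \<Rightarrow> (nat \<Rightarrow> 'a) \<Rightarrow> 'a" where
  "bilin_form N x y = (\<Sum>i<dim_row N. \<Sum>j<dim_row N. x i * N $$ (i, j) * y j)"

lemma bilin_form_diff_left: "bilin_form N (\<lambda>i. x i - y i) z = bilin_form N x z - bilin_form N y z"
  unfolding bilin_form_def by (simp add: left_diff_distrib sum_subtractf)

lemma bilin_form_diff_right: "bilin_form N z (\<lambda>i. x i - y i) = bilin_form N z x - bilin_form N z y"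
  unfolding bilin_form_def by (simp add: right_diff_distrib sum_subtractf)

lemma bilin_form_zero_right: "bilin_form N x (\<lambda>_. 0) = 0"
  unfolding bilin_form_def by simp

lemma bilin_form_commute:
  assumes "N \<in> carrier_mat n n" "transpose_mat N = N"
  shows "bilin_form N x y = bilin_form N y x"
proof -
  have sym: "N $$ (i, j) = N $$ (j, i)" if "i < n" "j < n" for i j
    using assms that by (metis carrier_matD index_transpose_mat(1))
  have "bilin_form N x y = (\<Sum>i<n. \<Sum>j<n. x i * N $$ (i, j) * y j)"
    unfolding bilin_form_def using assms(1) by simp
  also have "\<dots> = (\<Sum>j<n. \<Sum>i<n. x i * N $$ (i, j) * y j)"
    by (rule sum.swap)
  also have "\<dots> = bilin_form N y x"
    unfolding bilin_form_def using assms(1) sym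
    by (intro sum.cong refl) (auto simp: mult.commute mult.left_commute)
  finally show ?thesis .
qed

lemma det_add_mult_low_rank:
  fixes M :: "'a :: idom mat"
  assumes M: "M \<in> carrier_mat n n" and N: "N \<in> carrier_mat n n" "M * N = 1\<^sub>m n"
    and X: "X \<in> carrier_mat n k" and Y: "Y \<in> carrier_mat k n"
  shows "det (M + X * Y) = det M * det (1\<^sub>m k + Y * (N * X))"
proof -
  have NX: "N * X \<in> carrier_mat n k" using N X by auto
  have "M * (1\<^sub>m n + N * X * Y) = M * 1\<^sub>m n + M * (N * X * Y)"
    by (rule mult_add_distrib_mat) (use M N X Y in auto)
  also have "M * (N * X * Y) = M * N * X * Y"
    using assoc_mult_mat[OF M N(1) X] assoc_mult_mat[OF M NX Y] by simp
  finally have "M + X * Y = M * (1\<^sub>m n + N * X * Y)" using M N X by simp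
  then have "det (M + X * Y) = det M * det (1\<^sub>m n + N * X * Y)"
    using det_mult[OF M, of "1\<^sub>m n + N * X * Y"] NX Y by simp
  also have "det (1\<^sub>m n + N * X * Y) = det (1\<^sub>m k + Y * (N * X))"
    by (rule det_one_add_mult_commute[OF NX Y])
  finally show ?thesis .
qed

lemma det_add_rank2:
  fixes M :: "'a :: field mat"
  assumes M: "M \<in> carrier_mat n n" "det M \<noteq> 0" "transpose_mat M = M"
  defines "N \<equiv> (1 / det M) \<cdot>\<^sub>m adj_mat M"
  shows "det (M + mat n n (\<lambda>(i, j). a i * a j + b i * b j))
       = det M * ((1 + bilin_form N a a) * (1 + bilin_form N b b) - (bilin_form N a b)\<^sup>2)"
proof -
  note N = adj_mat_inverse_symmetric[OF M, folded N_def]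
  define X where "X = mat n 2 (\<lambda>(i, c). if c = 0 then a i else b i)"
  define Y where "Y = mat 2 n (\<lambda>(c, j). if c = 0 then a j else b j)"
  have X: "X \<in> carrier_mat n 2" and Y: "Y \<in> carrier_mat 2 n" unfolding X_def Y_def by auto
  have XY: "X * Y = mat n n (\<lambda>(i, j). a i * a j + b i * b j)"
    unfolding X_def Y_def by (intro eq_matI) (auto simp: scalar_prod_def numeral_2_eq_2 lessThan_Suc)
  have entries: "(Y * (N * X)) $$ (c, e) = bilin_form N (\<lambda>j. Y $$ (c, j)) (\<lambda>i. X $$ (i, e))"
    if "c < 2" "e < 2" for c e
    using that N(1) X Y
    by (simp add: scalar_prod_def atLeast0LessThan bilin_form_def sum_distrib_left mult.assoc)
  have rows: "bilin_form N (\<lambda>j. Y $$ (0, j)) = bilin_form N a"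
    "bilin_form N (\<lambda>j. Y $$ (1, j)) = bilin_form N b"
    unfolding bilin_form_def Y_def using N(1) by (auto intro!: ext sum.cong)
  have cols: "bilin_form N x (\<lambda>i. X $$ (i, 0)) = bilin_form N x a"
    "bilin_form N x (\<lambda>i. X $$ (i, 1)) = bilin_form N x b" for x
    unfolding bilin_form_def X_def using N(1) by (auto intro!: sum.cong)
  have Z: "Y * (N * X) \<in> carrier_mat 2 2" using Y N(1) X by auto
  have "(1\<^sub>m 2 + Y * (N * X)) $$ (i, j) = (if i = j then 1 else 0) + (Y * (N * X)) $$ (i, j)"
    if "i < 2" "j < 2" for i j
    using carrier_matD[OF Z] that by (simp add: index_add_mat)
  then have "det (1\<^sub>m 2 + Y * (N * X))
      = (1 + bilin_form N a a) * (1 + bilin_form N b b) - bilin_form N a b * bilin_form N b a"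
    using det_2x2[of "1\<^sub>m 2 + Y * (N * X)"] Z entries rows cols by simp
  then show ?thesis
    unfolding XY[symmetric] det_add_mult_low_rank[OF M(1) N(1,2) X Y]
      bilin_form_commute[OF N(1,3), of b a] by (simp add: power2_eq_square)
qed

section \<open>Effective resistance\<close>

lemma laplacian_add_edge:
  assumes "finite E"
  shows "laplacian (add_edge E) (add_edge_ends ends x y) u v = laplacian E ends u v
    + ((if u = x then 1 else 0) - (if u = y then 1 else 0)) * ((if v = x then 1 else 0) - (if v = y then 1 else 0))"
proof -
  have "incident_edges (add_edge E) (add_edge_ends ends x y) u
      = Some ` incident_edges E ends u \<union> (if x \<noteq> y \<and> (x = u \<or> y = u) then {None} else {})"
    "edges_between (add_edge E) (add_edge_ends ends x y) u v
      = Some ` edges_between E ends u v \<union> (if (x, y) = (u, v) \<or> (x, y) = (v, u) then {None} else {})"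
    unfolding incident_edges_def edges_between_def add_edge_def add_edge_ends_def by auto
  moreover have "finite (incident_edges E ends u)" "finite (edges_between E ends u v)"
    using assms unfolding incident_edges_def edges_between_def by auto
  ultimately have "card (incident_edges (add_edge E) (add_edge_ends ends x y) u)
      = card (incident_edges E ends u) + (if x \<noteq> y \<and> (x = u \<or> y = u) then 1 else 0)"
    "card (edges_between (add_edge E) (add_edge_ends ends x y) u v)
      = card (edges_between E ends u v) + (if (x, y) = (u, v) \<or> (x, y) = (v, u) then 1 else 0)"
    by (simp_all add: card_Un_disjoint card_image)
  then show ?thesis unfolding laplacian_def by auto
qed

definition vertex_vec :: "'v list \<Rightarrow> 'v \<Rightarrow> nat \<Rightarrow> real" where
  "vertex_vec vs x i = (if vs ! i = x then 1 else 0)"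

definition edge_vec :: "'v list \<Rightarrow> 'v \<Rightarrow> 'v \<Rightarrow> nat \<Rightarrow> real" where
  "edge_vec vs x y = (\<lambda>i. vertex_vec vs x i - vertex_vec vs y i)"

lemma laplacian_mat_add_edge:
  assumes "finite E"
  shows "laplacian_mat (add_edge E) (add_edge_ends ends x y) vs = laplacian_mat E ends vs
     + mat (length vs) (length vs) (\<lambda>(i, j). edge_vec vs x y i * edge_vec vs x y j)"
  by (intro eq_matI)
    (auto simp: laplacian_mat_def edge_vec_def vertex_vec_def laplacian_add_edge[OF assms])

lemma laplacian_mat_add_two_edges:
  assumes "finite E"
  shows "laplacian_mat (add_edge (add_edge E)) (add_edge_ends (add_edge_ends ends s t) p q) vs
     = laplacian_mat E ends vs + mat (length vs) (length vs)
         (\<lambda>(i, j). edge_vec vs s t i * edge_vec vs s t j + edge_vec vs p q i * edge_vec vs p q j)"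
  unfolding laplacian_mat_add_edge[OF finite_add_edge[OF assms]] laplacian_mat_add_edge[OF assms]
  by (intro eq_matI) (auto simp: laplacian_mat_def)

lemma transpose_laplacian_mat: "transpose_mat (laplacian_mat E ends vs) = laplacian_mat E ends vs"
  by (intro eq_matI) (auto simp: laplacian_mat_def laplacian_sym)

lemma bilin_form_edge_vec:
  "bilin_form N (edge_vec vs a b) (edge_vec vs c d)
   = bilin_form N (vertex_vec vs a) (vertex_vec vs c) - bilin_form N (vertex_vec vs a) (vertex_vec vs d)
   - bilin_form N (vertex_vec vs b) (vertex_vec vs c) + bilin_form N (vertex_vec vs b) (vertex_vec vs d)"
  unfolding edge_vec_def bilin_form_diff_left bilin_form_diff_right by simp

locale rooted_connected_mgraph =
  fixes V :: "'v set" and E :: "'e set" and ends :: "'e \<Rightarrow> 'v \<times> 'v" and r :: 'v and vs :: "'v list"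
  assumes mgraph: "mgraph V E ends" and mconnected: "mconnected V E ends"
    and root: "r \<in> V" and distinct_vs: "distinct vs" and set_vs: "set vs = V - {r}"
begin

definition L_inv :: "real mat" where
  "L_inv = (1 / det (laplacian_mat E ends vs)) \<cdot>\<^sub>m adj_mat (laplacian_mat E ends vs)"

definition eff_res :: "'v \<Rightarrow> 'v \<Rightarrow> real" where
  "eff_res x y = bilin_form L_inv (edge_vec vs x y) (edge_vec vs x y)"

lemma finite_E: "finite E"
  using mgraph unfolding mgraph_def by simp

lemma det_laplacian_mat: "det (laplacian_mat E ends vs) = real (ntrees V E ends)"
  using matrix_tree[OF mgraph root distinct_vs set_vs] by simp

lemma det_laplacian_mat_nonzero: "det (laplacian_mat E ends vs) \<noteq> 0"
  using ntrees_pos[OF mgraph mconnected] unfolding det_laplacian_mat by simp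

lemma det_laplacian_mat_add_rank2:
  "det (laplacian_mat E ends vs + mat (length vs) (length vs) (\<lambda>(i, j). a i * a j + b i * b j))
   = real (ntrees V E ends)
     * ((1 + bilin_form L_inv a a) * (1 + bilin_form L_inv b b) - (bilin_form L_inv a b)\<^sup>2)"
  unfolding L_inv_def det_laplacian_mat[symmetric]
  by (rule det_add_rank2[OF laplacian_mat_carrier det_laplacian_mat_nonzero transpose_laplacian_mat])

lemma ntrees_id_eq_eff_res:
  assumes "x \<in> V" "y \<in> V"
  shows "real (ntrees_id V E ends x y) = real (ntrees V E ends) * eff_res x y"
proof -
  have "real (ntrees V E ends) + real (ntrees_id V E ends x y)
      = real (ntrees V (add_edge E) (add_edge_ends ends x y))"
    using ntrees_add_edge[OF mgraph assms] by simp
  also have "\<dots> = det (laplacian_mat E ends vs + mat (length vs) (length vs)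
      (\<lambda>(i, j). edge_vec vs x y i * edge_vec vs x y j + 0 * 0))"
    using matrix_tree[OF mgraph_add_edge[OF mgraph assms] root distinct_vs set_vs]
    by (simp add: laplacian_mat_add_edge[OF finite_E])
  also have "\<dots> = real (ntrees V E ends) * (1 + eff_res x y)"
    unfolding det_laplacian_mat_add_rank2 eff_res_def bilin_form_zero_right by simp
  finally show ?thesis by (simp add: algebra_simps)
qed

lemma ntrees_id2_eq_eff_res:
  assumes "p \<in> V" "q \<in> V" "s \<in> V" "t \<in> V"
  shows "real (ntrees_id2 V E ends p q s t) = real (ntrees V E ends)
    * (eff_res s t * eff_res p q - (bilin_form L_inv (edge_vec vs s t) (edge_vec vs p q))\<^sup>2)"
proof -
  have "real (ntrees V E ends) + real (ntrees_id V E ends s t) + real (ntrees_id V E ends p q)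
      + real (ntrees_id2 V E ends p q s t)
      = real (ntrees V (add_edge (add_edge E)) (add_edge_ends (add_edge_ends ends s t) p q))"
    using ntrees_add_two_edges[OF mgraph assms] by simp
  also have "\<dots> = det (laplacian_mat E ends vs + mat (length vs) (length vs)
      (\<lambda>(i, j). edge_vec vs s t i * edge_vec vs s t j + edge_vec vs p q i * edge_vec vs p q j))"
    using matrix_tree[OF mgraph_add_edge[OF mgraph_add_edge[OF mgraph assms(3,4)] assms(1,2)]
        root distinct_vs set_vs]
    by (simp add: laplacian_mat_add_two_edges[OF finite_E])
  also have "\<dots> = real (ntrees V E ends) * ((1 + eff_res s t) * (1 + eff_res p q)
      - (bilin_form L_inv (edge_vec vs s t) (edge_vec vs p q))\<^sup>2)"
    unfolding det_laplacian_mat_add_rank2 eff_res_def ..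
  finally show ?thesis
    using ntrees_id_eq_eff_res[OF assms(3,4)] ntrees_id_eq_eff_res[OF assms(1,2)]
    by (simp add: algebra_simps)
qed

lemma bilin_form_edge_vecs_polarization:
  "2 * bilin_form L_inv (edge_vec vs s t) (edge_vec vs p q)
   = eff_res p t + eff_res q s - eff_res p s - eff_res q t"
proof -
  have "bilin_form L_inv x y = bilin_form L_inv y x" for x y
    using adj_mat_inverse_symmetric[OF laplacian_mat_carrier det_laplacian_mat_nonzero
        transpose_laplacian_mat, folded L_inv_def]
    by (intro bilin_form_commute) auto
  then show ?thesis
    unfolding eff_res_def bilin_form_edge_vec by (simp add: algebra_simps)
qed

end

theorem corollary5p2:
  fixes V :: "'v set" and E :: "'e set" and ends :: "'e \<Rightarrow> 'v \<times> 'v"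
  assumes "mgraph V E ends" and "mconnected V E ends"
    and "ei \<in> E" and "ends ei = (p, q)"
    and "s \<in> V" and "t \<in> V"
  shows "real (ntrees V E ends) * real (ntrees_id2 V E ends p q s t)
       = real (ntrees_id V E ends s t) * real (ntrees_id V E ends p q)
         - 1/4 * (real (ntrees_id V E ends p s) - real (ntrees_id V E ends q s)
                  - real (ntrees_id V E ends p t) + real (ntrees_id V E ends q t))^2"
proof -
  \<comment> \<open>the edge \<open>ei\<close> only serves to place \<open>p\<close> and \<open>q\<close> in \<open>V\<close>\<close>
  have "finite V" "p \<in> V" "q \<in> V"
    using assms(1,3,4) unfolding mgraph_def by force+
  then obtain vs where "distinct vs" "set vs = V - {p}"
    using finite_distinct_list[of "V - {p}"] by blast
  then interpret rooted_connected_mgraph V E ends p vs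
    using assms(1,2) \<open>p \<in> V\<close> by unfold_locales
  let ?T = "real (ntrees V E ends)" and ?B = "bilin_form L_inv (edge_vec vs s t) (edge_vec vs p q)"
  have bracket: "real (ntrees_id V E ends p s) - real (ntrees_id V E ends q s)
      - real (ntrees_id V E ends p t) + real (ntrees_id V E ends q t) = - 2 * ?T * ?B"
    using arg_cong[where f = "\<lambda>x. ?T * x", OF bilin_form_edge_vecs_polarization[of s t p q]]
    unfolding ntrees_id_eq_eff_res[OF \<open>p \<in> V\<close> assms(5)] ntrees_id_eq_eff_res[OF \<open>q \<in> V\<close> assms(5)]
      ntrees_id_eq_eff_res[OF \<open>p \<in> V\<close> assms(6)] ntrees_id_eq_eff_res[OF \<open>q \<in> V\<close> assms(6)]
    by (simp add: algebra_simps)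
  show ?thesis
    unfolding bracket ntrees_id2_eq_eff_res[OF \<open>p \<in> V\<close> \<open>q \<in> V\<close> assms(5,6)]
      ntrees_id_eq_eff_res[OF assms(5,6)] ntrees_id_eq_eff_res[OF \<open>p \<in> V\<close> \<open>q \<in> V\<close>]
    by (simp add: power2_eq_square algebra_simps)
qed

end
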